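(* For every $k\ge1$, $$p_k=\sum_{d\ge1}\frac{\hat\mu(d)}{d}\ln\bigl(1+\overline{p}_{dk}\bigr),$$ and consequently for every partition $\lambda$, $$p_\lambda=\sum_{d,n}\ \prod_{i=1}^{\ell(\lambda)}\frac{\hat\mu(d_i)(-1)^{n_i+1}}{d_in_i}\ \overline{p}_{(d\lambda)^n},$$ the sum over pairs of sequences $d,n$ of positive integers of length $\ell(\lambda)$.
   Context: $p_k=\sum_ix_i^k$; $1+\overline{p}_k=\prod_{i\ge1}(1+x_i^k)$, $\overline{p}_\lambda=\prod_i\overline{p}_{\lambda_i}$. $\hat\mu(n)=\mu(n)$ for $n$ odd and $\hat\mu(n)=2^{j-1}\mu(n/2^j)$ for $n$ even with $2^j$ the exact power of 2 dividing $n$ ($\mu$ the Möbius function). $(d\lambda)^n$ is the partition obtained by replacing each part $\lambda_i$ by $n_i$ copies of $d_i\lambda_i$, sorted. Identities hold in the degree-completed ring of symmetric functions. *)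

theory Defs
  imports Complex_Main "HOL-Library.Poly_Mapping" "HOL-Computational_Algebra.Squarefree"
begin

text \<open>Degree-completed ring of symmetric functions in variables x_1, x_2, ...
  (indexed here by nat), realised inside the ring of formal power series in
  countably many variables with real coefficients: a series is its coefficient
  function on monomials (finitely supported exponent vectors).\<close>

type_synonym mono = "nat \<Rightarrow>\<^sub>0 nat"
type_synonym sf = "mono \<Rightarrow> real"

definition sf_one :: sf where
  "sf_one m = (if m = 0 then 1 else 0)"

definition sf_mult :: "sf \<Rightarrow> sf \<Rightarrow> sf" where
  "sf_mult f g m = (\<Sum>(a, b) \<in> {(a, b). a + b = m}. f a * g b)"

definition sf_scale :: "real \<Rightarrow> sf \<Rightarrow> sf" where
  "sf_scale c f m = c * f m"

fun sf_pow :: "sf \<Rightarrow> nat \<Rightarrow> sf" where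
  "sf_pow f 0 = sf_one"
| "sf_pow f (Suc n) = sf_mult f (sf_pow f n)"

text \<open>Formal (coefficientwise) infinite sum of a family of series; all sums
  used below are locally finite (each coefficient receives finitely many
  nonzero contributions), in which case this is the sum in the completed ring.\<close>
definition sf_sum :: "('i \<Rightarrow> sf) \<Rightarrow> 'i set \<Rightarrow> sf" where
  "sf_sum F I m = (\<Sum>i \<in> {i \<in> I. F i m \<noteq> 0}. F i m)"

definition sf_prod_list :: "sf list \<Rightarrow> sf" where
  "sf_prod_list fs = foldr sf_mult fs sf_one"

definition sf_ln1p :: "sf \<Rightarrow> sf" where
  "sf_ln1p f = sf_sum (\<lambda>n. sf_scale ((-1) ^ (n + 1) / real n) (sf_pow f n)) {1..}"

definition psum :: "nat \<Rightarrow> sf" where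
  "psum k m = (if (\<exists>i. m = Poly_Mapping.single i k) then 1 else 0)"

text \<open>pbar_k defined by 1 + pbar_k = prod_i (1 + x_i^k): expanding the product,
  pbar_k = sum over nonempty finite sets S of prod_{i in S} x_i^k, i.e. the
  coefficient of a monomial is 1 iff it is nonzero and all its exponents lie in {0,k}.\<close>
definition pbar :: "nat \<Rightarrow> sf" where
  "pbar k m = (if m \<noteq> 0 \<and> (\<forall>i. Poly_Mapping.lookup m i = 0 \<or> Poly_Mapping.lookup m i = k) then 1 else 0)"

definition is_partition :: "nat list \<Rightarrow> bool" where
  "is_partition lam \<longleftrightarrow> sorted_wrt (\<ge>) lam \<and> (\<forall>x \<in> set lam. 0 < x)"

definition psum_part :: "nat list \<Rightarrow> sf" where
  "psum_part lam = sf_prod_list (map psum lam)"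

definition pbar_part :: "nat list \<Rightarrow> sf" where
  "pbar_part lam = sf_prod_list (map pbar lam)"

definition dpow_part :: "nat list \<Rightarrow> nat list \<Rightarrow> nat list \<Rightarrow> nat list" where
  "dpow_part lam d n =
     rev (sort (concat (map (\<lambda>i. replicate (n ! i) (d ! i * lam ! i)) [0..<length lam])))"

definition moebius :: "nat \<Rightarrow> int" where
  "moebius n = (if n = 0 \<or> \<not> squarefree n then 0 else (-1) ^ card (prime_factors n))"

definition muhat :: "nat \<Rightarrow> real" where
  "muhat n = (if odd n then real_of_int (moebius n)
              else 2 ^ (multiplicity (2::nat) n - 1) *
                   real_of_int (moebius (n div 2 ^ multiplicity (2::nat) n)))"

end

theory Submission
  imports Defs "HOL-Library.FuncSet" "HOL-Library.Multiset"
begin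

text \<open>
  We work in the ring of formal power series in \<open>x\<^sub>1, x\<^sub>2, ...\<close> with the Euler operator
  \<open>E = \<Sum>\<^sub>i x\<^sub>i \<partial>/\<partial>x\<^sub>i\<close>, the derivation that multiplies the coefficient of a monomial
  by its total degree. For \<open>f\<close> without constant term, \<open>ln (1 + f)\<close> is the unique series \<open>L\<close>
  without constant term such that \<open>(1 + f) * E L = E f\<close>. The series
  \<open>\<Sum>\<^sub>i ln (1 + x\<^sub>i ^ K) = \<Sum>\<^sub>j (-1) ^ (j + 1) / j * p\<^sub>j\<^sub>K\<close> satisfies this equation for
  \<open>f = pbar K\<close>, which is checked coefficientwise. Hence
  \<open>\<Sum>\<^sub>d muhat d / d * ln (1 + pbar (d k)) = \<Sum>\<^sub>N p\<^sub>N\<^sub>k / N * \<Sum>\<^bsub>d | N\<^esub> muhat d * (-1) ^ (N / d + 1)\<close>,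
  and the inner sum is \<open>[N = 1]\<close>: for \<open>N = 2 ^ a\<close> with \<open>a > 0\<close> it vanishes since
  \<open>muhat (2 ^ a) = \<Sum>\<^bsub>b < a\<^esub> muhat (2 ^ b)\<close>, and an odd prime factor of \<open>N\<close> pairs off the
  divisors. Multiplying the expansions of the \<open>p\<^bsub>\<lambda>\<^sub>i\<^esub>\<close> gives the formula for \<open>p\<^sub>\<lambda>\<close>; since
  \<open>pbar\<^bsub>(d\<lambda>)\<^sup>n\<^esub>\<close> has no terms of degree below \<open>\<Sum>\<^sub>i n\<^sub>i d\<^sub>i \<lambda>\<^sub>i\<close>, a coefficient of degree
  \<open>B\<close> only involves the finitely many terms with all \<open>d\<^sub>i, n\<^sub>i \<le> B\<close>.
\<close>

section \<open>Formal power series in countably many variables\<close>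

definition total_deg :: "mono \<Rightarrow> nat" where
  "total_deg m = (\<Sum>i\<in>Poly_Mapping.keys m. Poly_Mapping.lookup m i)"

lemma total_deg_add: "total_deg (a + b) = total_deg a + total_deg b"
  unfolding total_deg_def by (rule setsum_keys_plus_distrib) auto

lemma total_deg_0 [simp]: "total_deg 0 = 0"
  by (simp add: total_deg_def)

lemma total_deg_eq_0_iff: "total_deg m = 0 \<longleftrightarrow> m = 0"
proof
  assume "total_deg m = 0"
  then have "\<forall>i\<in>Poly_Mapping.keys m. Poly_Mapping.lookup m i = 0"
    unfolding total_deg_def by (simp add: sum_eq_0_iff)
  show "m = 0"
  proof (rule poly_mapping_eqI)
    fix i
    show "Poly_Mapping.lookup m i = Poly_Mapping.lookup 0 i"
      using \<open>\<forall>i\<in>Poly_Mapping.keys m. Poly_Mapping.lookup m i = 0\<close>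
      by (cases "i \<in> Poly_Mapping.keys m") (auto simp: in_keys_iff)
  qed
qed simp

lemma total_deg_single [simp]: "total_deg (Poly_Mapping.single i j) = j"
  by (cases "j = 0") (auto simp: total_deg_def)

lemma lookup_le_total_deg: "Poly_Mapping.lookup m i \<le> total_deg m"
proof (cases "i \<in> Poly_Mapping.keys m")
  case True
  then show ?thesis unfolding total_deg_def by (intro member_le_sum) auto
qed (simp add: in_keys_iff)

lemma card_keys_eq_1_imp_single:
  fixes b :: mono
  assumes "card (Poly_Mapping.keys b) = 1"
  obtains i where "b = Poly_Mapping.single i (Poly_Mapping.lookup b i)" "Poly_Mapping.lookup b i > 0"
proof -
  from assms obtain i where keys: "Poly_Mapping.keys b = {i}"
    by (rule card_1_singletonE)
  have "b = Poly_Mapping.single i (Poly_Mapping.lookup b i)"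
  proof (rule poly_mapping_eqI)
    fix j
    show "Poly_Mapping.lookup b j = Poly_Mapping.lookup (Poly_Mapping.single i (Poly_Mapping.lookup b i)) j"
    proof (cases "j = i")
      case False
      then have "j \<notin> Poly_Mapping.keys b" using keys by auto
      then show ?thesis using False by (simp add: in_keys_iff lookup_single_not_eq)
    qed simp
  qed
  moreover have "Poly_Mapping.lookup b i > 0"
    using keys in_keys_iff[of i b] by simp
  ultimately show ?thesis by (rule that)
qed

lemma single_eq_single_iff:
  assumes "j > 0"
  shows "Poly_Mapping.single i j = Poly_Mapping.single i' (j'::nat) \<longleftrightarrow> i = i' \<and> j = j'"
proof
  assume eq: "Poly_Mapping.single i j = Poly_Mapping.single i' j'"
  then have "Poly_Mapping.lookup (Poly_Mapping.single i j) i = Poly_Mapping.lookup (Poly_Mapping.single i' j') i"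
    by simp
  then have "j = (j' when i' = i)"
    by (simp add: lookup_single)
  then show "i = i' \<and> j = j'"
    using assms by (auto simp: when_def split: if_splits)
qed simp

lemma finite_pointwise_le:
  "finite {a::mono. \<forall>i. Poly_Mapping.lookup a i \<le> Poly_Mapping.lookup m i}" (is "finite ?A")
proof -
  let ?f = "\<lambda>a::mono. restrict (Poly_Mapping.lookup a) (Poly_Mapping.keys m)"
  have "?f ` ?A \<subseteq> PiE (Poly_Mapping.keys m) (\<lambda>i. {0..Poly_Mapping.lookup m i})"
    by (auto simp: PiE_def)
  moreover have "finite (PiE (Poly_Mapping.keys m) (\<lambda>i. {0..Poly_Mapping.lookup m i}))"
    by (intro finite_PiE) auto
  ultimately have "finite (?f ` ?A)"
    by (rule finite_subset)
  moreover have "inj_on ?f ?A"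
  proof (rule inj_onI)
    fix a b assume a: "a \<in> ?A" and b: "b \<in> ?A" and eq: "?f a = ?f b"
    show "a = b"
    proof (rule poly_mapping_eqI)
      fix i
      show "Poly_Mapping.lookup a i = Poly_Mapping.lookup b i"
      proof (cases "i \<in> Poly_Mapping.keys m")
        case True
        then show ?thesis using fun_cong[OF eq, of i] by simp
      next
        case False
        then have "Poly_Mapping.lookup m i = 0" by (simp add: in_keys_iff)
        moreover have "Poly_Mapping.lookup a i \<le> Poly_Mapping.lookup m i"
          "Poly_Mapping.lookup b i \<le> Poly_Mapping.lookup m i" using a b by auto
        ultimately show ?thesis by simp
      qed
    qed
  qed
  ultimately show ?thesis by (rule finite_imageD)
qed

definition splittings :: "mono \<Rightarrow> (mono \<times> mono) set" where
  "splittings m = {(a, b). a + b = m}"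

lemma finite_splittings [simp]: "finite (splittings m)"
proof -
  let ?A = "{a::mono. \<forall>i. Poly_Mapping.lookup a i \<le> Poly_Mapping.lookup m i}"
  have "splittings m \<subseteq> ?A \<times> ?A"
    by (auto simp: splittings_def lookup_add)
  then show ?thesis by (rule finite_subset) (simp add: finite_pointwise_le)
qed

lemma splittings_total_deg_le:
  "(a, b) \<in> splittings m \<Longrightarrow> total_deg a \<le> total_deg m \<and> total_deg b \<le> total_deg m"
  by (auto simp: splittings_def total_deg_add)

lemma sum_splittings_only_0:
  assumes "\<And>a b. (a, b) \<in> splittings m \<Longrightarrow> a \<noteq> 0 \<Longrightarrow> h a b = 0"
  shows "(\<Sum>(a, b)\<in>splittings m. h a b) = h 0 m"
proof -
  have "(\<Sum>(a, b)\<in>splittings m. h a b) = (\<Sum>(a, b)\<in>{(0, m)}. h a b)"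
  proof (rule sum.mono_neutral_right)
    show "\<forall>p\<in>splittings m - {(0, m)}. (case p of (a, b) \<Rightarrow> h a b) = 0"
      using assms by (fastforce simp: splittings_def)
  qed (simp, simp add: splittings_def)
  then show ?thesis by simp
qed

lemma sum_splittings_swap:
  "(\<Sum>(a, b)\<in>splittings m. h a b) = (\<Sum>(a, b)\<in>splittings m. h b a)"
  by (rule sum.reindex_bij_witness[where i = "\<lambda>(a, b). (b, a)" and j = "\<lambda>(a, b). (b, a)"])
     (auto simp: splittings_def add.commute)

lemma sum_splittings_assoc:
  "(\<Sum>(a, b)\<in>splittings m. \<Sum>(c, d)\<in>splittings a. h c d b) =
   (\<Sum>(c, a)\<in>splittings m. \<Sum>(d, b)\<in>splittings a. h c d b)"
proof -
  have "(\<Sum>(a, b)\<in>splittings m. \<Sum>(c, d)\<in>splittings a. h c d b) =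
        (\<Sum>p\<in>splittings m. \<Sum>q\<in>splittings (fst p). h (fst q) (snd q) (snd p))"
    by (simp add: split_def)
  also have "\<dots> = (\<Sum>pq\<in>Sigma (splittings m) (\<lambda>p. splittings (fst p)).
           h (fst (snd pq)) (snd (snd pq)) (snd (fst pq)))"
    by (subst sum.Sigma) (auto simp: split_def)
  also have "\<dots> = (\<Sum>pq\<in>Sigma (splittings m) (\<lambda>p. splittings (snd p)).
           h (fst (fst pq)) (fst (snd pq)) (snd (snd pq)))"
    by (rule sum.reindex_bij_witness[where i = "\<lambda>((c, a), (d, b)). ((c + d, b), (c, d))"
         and j = "\<lambda>((a, b), (c, d)). ((c, d + b), (d, b))"])
       (clarsimp simp: splittings_def add.assoc)+
  also have "\<dots> = (\<Sum>p\<in>splittings m. \<Sum>q\<in>splittings (snd p). h (fst p) (fst q) (snd q))"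
    by (subst sum.Sigma) (auto simp: split_def)
  also have "\<dots> = (\<Sum>(c, a)\<in>splittings m. \<Sum>(d, b)\<in>splittings a. h c d b)"
    by (simp add: split_def)
  finally show ?thesis .
qed

lemma sum_splittings_single_right:
  assumes "\<And>a b. (a, b) \<in> splittings m \<Longrightarrow> card (Poly_Mapping.keys b) \<noteq> 1 \<Longrightarrow> h a b = 0"
  shows "(\<Sum>(a, b)\<in>splittings m. h a b) =
    (\<Sum>i\<in>Poly_Mapping.keys m. \<Sum>t\<in>{1..Poly_Mapping.lookup m i}.
       h (m - Poly_Mapping.single i t) (Poly_Mapping.single i t))"
proof -
  define Q where "Q = Sigma (Poly_Mapping.keys m) (\<lambda>i. {1..Poly_Mapping.lookup m i})"
  define \<phi> where "\<phi> = (\<lambda>(i, t). (m - Poly_Mapping.single i t, Poly_Mapping.single i (t::nat)))"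
  have sub: "\<phi> ` Q \<subseteq> splittings m"
  proof (rule image_subsetI)
    fix q assume "q \<in> Q"
    then obtain i t where q: "q = (i, t)" and it: "(i, t) \<in> Q" by (metis surj_pair)
    have "m - Poly_Mapping.single i t + Poly_Mapping.single i t = m"
      by (rule poly_mapping_eqI) (use it in \<open>auto simp: Q_def lookup_add lookup_minus lookup_single when_def\<close>)
    then show "\<phi> q \<in> splittings m" by (simp add: q \<phi>_def splittings_def)
  qed
  have "(\<Sum>(a, b)\<in>splittings m. h a b) = (\<Sum>(a, b)\<in>\<phi> ` Q. h a b)"
  proof (rule sum.mono_neutral_right[OF finite_splittings sub], clarify)
    fix a b assume ab: "(a, b) \<in> splittings m" "(a, b) \<notin> \<phi> ` Q"
    show "h a b = 0"
    proof (rule ccontr)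
      assume "h a b \<noteq> 0"
      then obtain i where i: "b = Poly_Mapping.single i (Poly_Mapping.lookup b i)" "Poly_Mapping.lookup b i > 0"
        using assms ab(1) card_keys_eq_1_imp_single by metis
      have m: "m = a + b" using ab(1) by (simp add: splittings_def)
      then have "(i, Poly_Mapping.lookup b i) \<in> Q"
        using i(2) by (auto simp: Q_def lookup_add in_keys_iff)
      moreover have "\<phi> (i, Poly_Mapping.lookup b i) = (a, b)"
        by (simp add: \<phi>_def m flip: i(1))
      ultimately show False using ab(2) by (metis image_eqI)
    qed
  qed
  also have "\<dots> = (\<Sum>(i, t)\<in>Q. h (m - Poly_Mapping.single i t) (Poly_Mapping.single i t))"
  proof (subst sum.reindex)
    show "inj_on \<phi> Q"
      by (rule inj_onI) (auto simp: \<phi>_def Q_def single_eq_single_iff)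
  qed (simp add: \<phi>_def case_prod_beta)
  also have "\<dots> = (\<Sum>i\<in>Poly_Mapping.keys m. \<Sum>t\<in>{1..Poly_Mapping.lookup m i}.
       h (m - Poly_Mapping.single i t) (Poly_Mapping.single i t))"
    unfolding Q_def by (subst sum.Sigma) auto
  finally show ?thesis .
qed

lemma sf_mult_eq_sum_splittings: "sf_mult f g m = (\<Sum>(a, b)\<in>splittings m. f a * g b)"
  by (simp add: sf_mult_def splittings_def)

lemma sf_mult_commute: "sf_mult f g = sf_mult g f"
  by (rule ext) (simp add: sf_mult_eq_sum_splittings sum_splittings_swap[where h = "\<lambda>a b. f a * g b"] mult.commute)

lemma sf_mult_assoc: "sf_mult (sf_mult f g) h = sf_mult f (sf_mult g h)"
proof (rule ext)
  fix m
  have "sf_mult (sf_mult f g) h m = (\<Sum>(a, b)\<in>splittings m. \<Sum>(c, d)\<in>splittings a. f c * g d * h b)"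
    by (simp add: sf_mult_eq_sum_splittings sum_distrib_right case_prod_beta)
  also have "\<dots> = (\<Sum>(c, a)\<in>splittings m. \<Sum>(d, b)\<in>splittings a. f c * g d * h b)"
    by (rule sum_splittings_assoc)
  also have "\<dots> = sf_mult f (sf_mult g h) m"
    by (simp add: sf_mult_eq_sum_splittings sum_distrib_left case_prod_beta mult.assoc)
  finally show "sf_mult (sf_mult f g) h m = sf_mult f (sf_mult g h) m" .
qed

lemma sf_mult_one_left: "sf_mult sf_one g = g"
proof (rule ext)
  fix m
  have "sf_mult sf_one g m = (\<Sum>(a, b)\<in>splittings m. sf_one a * g b)"
    by (simp add: sf_mult_eq_sum_splittings)
  also have "\<dots> = sf_one 0 * g m"
    by (rule sum_splittings_only_0) (simp add: sf_one_def)
  finally show "sf_mult sf_one g m = g m" by (simp add: sf_one_def)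
qed

lemma sf_mult_add_left: "sf_mult (\<lambda>m. f m + g m) h = (\<lambda>m. sf_mult f h m + sf_mult g h m)"
proof (rule ext)
  fix m
  show "sf_mult (\<lambda>m. f m + g m) h m = sf_mult f h m + sf_mult g h m"
    unfolding sf_mult_eq_sum_splittings sum.distrib[symmetric]
    by (rule sum.cong) (auto simp: distrib_right)
qed

lemma sf_sum_eq_sum:
  assumes "finite J" "\<And>i. i \<in> I \<Longrightarrow> F i m \<noteq> 0 \<Longrightarrow> i \<in> J"
  shows "sf_sum F I m = (\<Sum>i\<in>I \<inter> J. F i m)"
  unfolding sf_sum_def by (rule sum.mono_neutral_left) (use assms in auto)

typedef mfps = "UNIV :: sf set"
  morphisms mfps_nth Abs_mfps
  by simp

lemma mfps_nth_Abs_mfps [simp]: "mfps_nth (Abs_mfps f) = f"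
  by (simp add: Abs_mfps_inverse)

lemma mfps_eqI: "(\<And>m. mfps_nth f m = mfps_nth g m) \<Longrightarrow> f = g"
  by (metis mfps_nth_inverse ext)

instantiation mfps :: comm_ring_1
begin

definition zero_mfps_def: "0 = Abs_mfps (\<lambda>_. 0)"
definition one_mfps_def: "1 = Abs_mfps sf_one"
definition plus_mfps_def: "f + g = Abs_mfps (\<lambda>m. mfps_nth f m + mfps_nth g m)"
definition minus_mfps_def: "f - g = Abs_mfps (\<lambda>m. mfps_nth f m - mfps_nth g m)"
definition uminus_mfps_def: "- f = Abs_mfps (\<lambda>m. - mfps_nth f m)"
definition times_mfps_def: "f * g = Abs_mfps (sf_mult (mfps_nth f) (mfps_nth g))"

instance
proof
  fix f g h :: mfps
  show "f * g * h = f * (g * h)" by (simp add: times_mfps_def sf_mult_assoc)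
  show "f * g = g * f" by (simp add: times_mfps_def sf_mult_commute)
  show "1 * f = f" by (simp add: times_mfps_def one_mfps_def sf_mult_one_left mfps_nth_inverse)
  show "f + g + h = f + (g + h)" by (simp add: plus_mfps_def add.assoc)
  show "f + g = g + f" by (simp add: plus_mfps_def add.commute)
  show "0 + f = f" by (simp add: plus_mfps_def zero_mfps_def mfps_nth_inverse)
  show "- f + f = 0" by (simp add: plus_mfps_def zero_mfps_def uminus_mfps_def)
  show "f - g = f + - g" by (simp add: plus_mfps_def minus_mfps_def uminus_mfps_def)
  show "(f + g) * h = f * h + g * h" by (simp add: plus_mfps_def times_mfps_def sf_mult_add_left)
  show "(0::mfps) \<noteq> 1"
  proof
    assume "(0::mfps) = 1"
    then have "mfps_nth 0 0 = mfps_nth 1 0" by simp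
    then show False by (simp add: zero_mfps_def one_mfps_def sf_one_def)
  qed
qed

end

lemma mfps_nth_zero [simp]: "mfps_nth 0 m = 0"
  by (simp add: zero_mfps_def)

lemma mfps_nth_one: "mfps_nth 1 m = (if m = 0 then 1 else 0)"
  by (simp add: one_mfps_def sf_one_def)

lemma mfps_nth_add [simp]: "mfps_nth (f + g) m = mfps_nth f m + mfps_nth g m"
  by (simp add: plus_mfps_def)

lemma mfps_nth_diff [simp]: "mfps_nth (f - g) m = mfps_nth f m - mfps_nth g m"
  by (simp add: minus_mfps_def)

lemma mfps_nth_mult: "mfps_nth (f * g) m = (\<Sum>(a, b)\<in>splittings m. mfps_nth f a * mfps_nth g b)"
  by (simp add: times_mfps_def sf_mult_eq_sum_splittings)

lemma mfps_nth_sum [simp]: "mfps_nth (sum f A) m = (\<Sum>i\<in>A. mfps_nth (f i) m)"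
  by (induction A rule: infinite_finite_induct) auto

lemma mfps_nth_power: "mfps_nth (f ^ n) = sf_pow (mfps_nth f) n"
  by (induction n) (auto simp: one_mfps_def times_mfps_def)

lemma mfps_nth_prod_list: "mfps_nth (prod_list (map Abs_mfps fs)) = sf_prod_list fs"
  by (induction fs) (auto simp: sf_prod_list_def one_mfps_def times_mfps_def)

definition mfps_const :: "real \<Rightarrow> mfps" where
  "mfps_const c = Abs_mfps (\<lambda>m. if m = 0 then c else 0)"

lemma mfps_nth_const: "mfps_nth (mfps_const c) m = (if m = 0 then c else 0)"
  by (simp add: mfps_const_def)

lemma mfps_nth_const_mult [simp]: "mfps_nth (mfps_const c * f) m = c * mfps_nth f m"
proof -
  have "mfps_nth (mfps_const c * f) m = mfps_nth (mfps_const c) 0 * mfps_nth f m"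
    unfolding mfps_nth_mult by (rule sum_splittings_only_0) (simp add: mfps_nth_const)
  then show ?thesis by (simp add: mfps_nth_const)
qed

lemma mfps_const_mult: "mfps_const (a * b) = mfps_const a * mfps_const b"
  by (rule mfps_eqI) (simp add: mfps_nth_const)

lemma mfps_const_uminus: "mfps_const (- a) = - mfps_const a"
  by (rule mfps_eqI) (simp add: mfps_const_def uminus_mfps_def)

lemma mfps_const_1 [simp]: "mfps_const 1 = 1"
  by (rule mfps_eqI) (simp add: mfps_const_def mfps_nth_one)

definition vanishes_below :: "nat \<Rightarrow> mfps \<Rightarrow> bool" where
  "vanishes_below r f \<longleftrightarrow> (\<forall>m. total_deg m < r \<longrightarrow> mfps_nth f m = 0)"

lemma vanishes_below_0 [simp]: "vanishes_below 0 f"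
  by (simp add: vanishes_below_def)

lemma vanishes_below_mono: "vanishes_below r f \<Longrightarrow> r' \<le> r \<Longrightarrow> vanishes_below r' f"
  by (auto simp: vanishes_below_def)

lemma vanishes_below_mult:
  assumes "vanishes_below r f" "vanishes_below s g"
  shows "vanishes_below (r + s) (f * g)"
  unfolding vanishes_below_def
proof (intro allI impI)
  fix m assume m: "total_deg m < r + s"
  have "mfps_nth (f * g) m = (\<Sum>(a, b)\<in>splittings m. mfps_nth f a * mfps_nth g b)"
    by (rule mfps_nth_mult)
  also have "\<dots> = 0"
  proof (rule sum.neutral, clarify)
    fix a b assume "(a, b) \<in> splittings m"
    then have "total_deg a < r \<or> total_deg b < s"
      using m by (auto simp: splittings_def total_deg_add)
    then show "mfps_nth f a * mfps_nth g b = 0"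
      using assms by (auto simp: vanishes_below_def)
  qed
  finally show "mfps_nth (f * g) m = 0" .
qed

lemma vanishes_below_power: "vanishes_below r f \<Longrightarrow> vanishes_below (n * r) (f ^ n)"
  by (induction n) (simp_all add: vanishes_below_mult)

lemma vanishes_below_const_mult: "vanishes_below r f \<Longrightarrow> vanishes_below r (mfps_const c * f)"
  by (simp add: vanishes_below_def)

lemma vanishes_below_prod:
  "finite A \<Longrightarrow> (\<And>i. i \<in> A \<Longrightarrow> vanishes_below (r i) (f i)) \<Longrightarrow>
    vanishes_below (\<Sum>i\<in>A. r i) (\<Prod>i\<in>A. f i)"
  by (induction A rule: finite_induct) (simp_all add: vanishes_below_mult)

definition agree_upto :: "nat \<Rightarrow> mfps \<Rightarrow> mfps \<Rightarrow> bool" where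
  "agree_upto B f g \<longleftrightarrow> (\<forall>m. total_deg m \<le> B \<longrightarrow> mfps_nth f m = mfps_nth g m)"

lemma agree_upto_refl [simp]: "agree_upto B f f"
  by (simp add: agree_upto_def)

lemma agree_upto_mult:
  assumes "agree_upto B f f'" "agree_upto B g g'"
  shows "agree_upto B (f * g) (f' * g')"
  unfolding agree_upto_def
proof (intro allI impI)
  fix m assume m: "total_deg m \<le> B"
  show "mfps_nth (f * g) m = mfps_nth (f' * g') m"
    unfolding mfps_nth_mult
  proof (rule sum.cong, simp, clarify)
    fix a b assume "(a, b) \<in> splittings m"
    then have "total_deg a \<le> B" "total_deg b \<le> B"
      using m splittings_total_deg_le by fastforce+
    then show "mfps_nth f a * mfps_nth g b = mfps_nth f' a * mfps_nth g' b"
      using assms by (simp add: agree_upto_def)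
  qed
qed

lemma agree_upto_prod_list:
  "(\<And>x. x \<in> set xs \<Longrightarrow> agree_upto B (f x) (g x)) \<Longrightarrow>
    agree_upto B (prod_list (map f xs)) (prod_list (map g xs))"
  by (induction xs) (simp_all add: agree_upto_mult)

lemma agree_upto_total_deg: "agree_upto (total_deg m) f g \<Longrightarrow> mfps_nth f m = mfps_nth g m"
  by (simp add: agree_upto_def)

section \<open>The Euler operator and the logarithm\<close>

definition euler_op :: "mfps \<Rightarrow> mfps" where
  "euler_op f = Abs_mfps (\<lambda>m. real (total_deg m) * mfps_nth f m)"

lemma mfps_nth_euler_op: "mfps_nth (euler_op f) m = real (total_deg m) * mfps_nth f m"
  by (simp add: euler_op_def)

lemma euler_op_add: "euler_op (f + g) = euler_op f + euler_op g"
  by (rule mfps_eqI) (simp add: mfps_nth_euler_op distrib_left)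

lemma euler_op_diff: "euler_op (f - g) = euler_op f - euler_op g"
  by (rule mfps_eqI) (simp add: mfps_nth_euler_op right_diff_distrib)

lemma euler_op_0 [simp]: "euler_op 0 = 0"
  by (rule mfps_eqI) (simp add: mfps_nth_euler_op)

lemma euler_op_const [simp]: "euler_op (mfps_const c) = 0"
  by (rule mfps_eqI) (simp add: mfps_nth_euler_op mfps_nth_const)

lemma euler_op_mult: "euler_op (f * g) = euler_op f * g + f * euler_op g"
proof (rule mfps_eqI)
  fix m
  have "mfps_nth (euler_op (f * g)) m =
      (\<Sum>(a, b)\<in>splittings m. real (total_deg m) * (mfps_nth f a * mfps_nth g b))"
    by (simp add: mfps_nth_euler_op mfps_nth_mult sum_distrib_left case_prod_beta)
  also have "\<dots> = (\<Sum>(a, b)\<in>splittings m.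
      real (total_deg a) * mfps_nth f a * mfps_nth g b + mfps_nth f a * (real (total_deg b) * mfps_nth g b))"
    by (rule sum.cong) (auto simp: splittings_def total_deg_add algebra_simps)
  also have "\<dots> = mfps_nth (euler_op f * g + f * euler_op g) m"
    by (simp add: mfps_nth_mult mfps_nth_euler_op sum.distrib case_prod_beta)
  finally show "mfps_nth (euler_op (f * g)) m = mfps_nth (euler_op f * g + f * euler_op g) m" .
qed

lemma vanishes_below_1_euler_op: "vanishes_below 1 (euler_op f)"
  by (simp add: vanishes_below_def mfps_nth_euler_op)

lemma agree_upto_euler_op: "agree_upto B f g \<Longrightarrow> agree_upto B (euler_op f) (euler_op g)"
  by (simp add: agree_upto_def mfps_nth_euler_op)

lemma euler_op_const_mult: "euler_op (mfps_const c * f) = mfps_const c * euler_op f"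
  by (simp add: euler_op_mult)

lemma euler_op_power: "euler_op (f ^ Suc n) = mfps_const (real (Suc n)) * f ^ n * euler_op f"
proof (induction n)
  case 0
  then show ?case by simp
next
  case (Suc n)
  have "euler_op (f ^ Suc (Suc n)) = euler_op f * f ^ Suc n + f * euler_op (f ^ Suc n)"
    by (simp only: power_Suc[of f "Suc n"] euler_op_mult)
  also have "\<dots> = (1 + mfps_const (real (Suc n))) * f ^ Suc n * euler_op f"
    by (simp only: Suc) (simp add: algebra_simps)
  also have "1 + mfps_const (real (Suc n)) = mfps_const (real (Suc (Suc n)))"
    by (rule mfps_eqI) (simp add: mfps_nth_const mfps_nth_one)
  finally show ?case .
qed

text \<open>The coefficient of \<open>m\<close> in \<open>(1 + f) * g\<close> is that of \<open>g\<close> plus coefficients of \<open>g\<close> of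
  lower degree, so induction on the degree applies.\<close>
lemma one_plus_mult_eq_0D:
  assumes f: "vanishes_below 1 f" and fg: "(1 + f) * g = 0"
  shows "g = 0"
proof -
  have "\<forall>m. total_deg m = n \<longrightarrow> mfps_nth g m = 0" for n
  proof (induction n rule: less_induct)
    case (less n)
    show ?case
    proof (intro allI impI)
      fix m assume n: "total_deg m = n"
      have "0 = mfps_nth ((1 + f) * g) m"
        by (simp add: fg)
      also have "\<dots> = mfps_nth (1 + f) 0 * mfps_nth g m"
        unfolding mfps_nth_mult
      proof (rule sum_splittings_only_0)
        fix a b assume ab: "(a, b) \<in> splittings m" "a \<noteq> 0"
        then have "total_deg b < n"
          using n total_deg_eq_0_iff[of a] by (auto simp: splittings_def total_deg_add)
        then show "mfps_nth (1 + f) a * mfps_nth g b = 0"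
          using less by simp
      qed
      also have "\<dots> = mfps_nth g m"
        using f by (simp add: vanishes_below_def mfps_nth_one)
      finally show "mfps_nth g m = 0" by simp
    qed
  qed
  then show ?thesis by (intro mfps_eqI) simp
qed

lemma euler_op_eq_0D:
  assumes "euler_op g = 0" "mfps_nth g 0 = 0"
  shows "g = 0"
proof (rule mfps_eqI)
  fix m
  have "real (total_deg m) * mfps_nth g m = 0"
    using arg_cong[OF assms(1), of "\<lambda>f. mfps_nth f m"] by (simp add: mfps_nth_euler_op)
  then show "mfps_nth g m = mfps_nth 0 m"
    using assms(2) total_deg_eq_0_iff[of m] by (cases "m = 0") auto
qed

lemma euler_ode_unique:
  assumes f: "vanishes_below 1 f"
    and ode: "(1 + f) * euler_op g = (1 + f) * euler_op h"
    and const: "mfps_nth g 0 = mfps_nth h 0"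
  shows "g = h"
proof -
  have "(1 + f) * euler_op (g - h) = 0"
    using ode by (simp add: euler_op_diff right_diff_distrib)
  then have "euler_op (g - h) = 0"
    by (rule one_plus_mult_eq_0D[OF f])
  then have "g - h = 0"
    by (rule euler_op_eq_0D) (simp add: const)
  then show ?thesis by simp
qed

definition log_coeff :: "nat \<Rightarrow> real" where
  "log_coeff n = (-1) ^ (n + 1) / real n"

definition mfps_ln1p :: "mfps \<Rightarrow> mfps" where
  "mfps_ln1p f = Abs_mfps (sf_ln1p (mfps_nth f))"

definition ln1p_partial :: "nat \<Rightarrow> mfps \<Rightarrow> mfps" where
  "ln1p_partial N f = (\<Sum>n\<in>{1..N}. mfps_const (log_coeff n) * f ^ n)"

lemma agree_upto_ln1p_partial:
  assumes f: "vanishes_below 1 f"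
  shows "agree_upto B (mfps_ln1p f) (ln1p_partial B f)"
  unfolding agree_upto_def
proof (intro allI impI)
  fix m assume m: "total_deg m \<le> B"
  have "sf_ln1p (mfps_nth f) m = (\<Sum>n\<in>{1..} \<inter> {1..B}. sf_scale (log_coeff n) (sf_pow (mfps_nth f) n) m)"
    unfolding sf_ln1p_def log_coeff_def[symmetric]
  proof (rule sf_sum_eq_sum)
    fix n assume "n \<in> {1::nat..}" and nz: "sf_scale (log_coeff n) (sf_pow (mfps_nth f) n) m \<noteq> 0"
    have "vanishes_below (n * 1) (f ^ n)"
      by (rule vanishes_below_power[OF f])
    then have "\<not> total_deg m < n"
      using nz by (auto simp: vanishes_below_def sf_scale_def mfps_nth_power[symmetric])
    then show "n \<in> {1..B}" using \<open>n \<in> {1..}\<close> m by auto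
  qed simp
  also have "{1..} \<inter> {1..B} = {1..B}" by auto
  finally show "mfps_nth (mfps_ln1p f) m = mfps_nth (ln1p_partial B f) m"
    by (simp add: mfps_ln1p_def ln1p_partial_def sf_scale_def mfps_nth_power)
qed

lemma ln1p_partial_ode:
  "(1 + f) * euler_op (ln1p_partial N f) =
     euler_op f + mfps_const ((-1) ^ (N + 1)) * f ^ N * euler_op f"
proof (induction N)
  case 0
  then show ?case by (simp add: ln1p_partial_def mfps_const_uminus)
next
  case (Suc N)
  define s :: real where "s = (-1) ^ (N + 1)"
  have "mfps_const (log_coeff (Suc N)) * euler_op (f ^ Suc N) =
      mfps_const (log_coeff (Suc N) * real (Suc N)) * f ^ N * euler_op f"
    by (simp only: euler_op_power) (simp add: mfps_const_mult mult.assoc)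
  also have "log_coeff (Suc N) * real (Suc N) = - s"
    by (simp add: log_coeff_def s_def)
  finally have "euler_op (ln1p_partial (Suc N) f) = euler_op (ln1p_partial N f) - mfps_const s * f ^ N * euler_op f"
    by (simp add: ln1p_partial_def euler_op_add euler_op_const_mult mfps_const_uminus)
  then have "(1 + f) * euler_op (ln1p_partial (Suc N) f) =
      euler_op f + mfps_const s * f ^ N * euler_op f - (1 + f) * (mfps_const s * f ^ N * euler_op f)"
    using Suc by (simp add: right_diff_distrib s_def)
  also have "\<dots> = euler_op f + mfps_const (- s) * f ^ Suc N * euler_op f"
    by (simp add: mfps_const_uminus algebra_simps)
  finally show ?case by (simp add: s_def)
qed

text \<open>The partial sum of degree \<open>B\<close> solves the equation up to \<open>\<plusminus>f ^ B * euler_op f\<close>, which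
  vanishes below degree \<open>B + 1\<close>.\<close>
lemma ln1p_ode:
  assumes f: "vanishes_below 1 f"
  shows "(1 + f) * euler_op (mfps_ln1p f) = euler_op f"
proof (rule mfps_eqI)
  fix m
  define B where "B = total_deg m"
  have "agree_upto B ((1 + f) * euler_op (mfps_ln1p f)) ((1 + f) * euler_op (ln1p_partial B f))"
    by (intro agree_upto_mult agree_upto_euler_op agree_upto_ln1p_partial f agree_upto_refl)
  then have "mfps_nth ((1 + f) * euler_op (mfps_ln1p f)) m = mfps_nth ((1 + f) * euler_op (ln1p_partial B f)) m"
    by (simp add: agree_upto_def B_def)
  also have "\<dots> = mfps_nth (euler_op f) m + mfps_nth (mfps_const ((-1) ^ (B + 1)) * f ^ B * euler_op f) m"
    by (simp add: ln1p_partial_ode)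
  also have "mfps_nth (mfps_const ((-1) ^ (B + 1)) * f ^ B * euler_op f) m = 0"
  proof -
    have "vanishes_below (B * 1 + 1) (mfps_const ((-1) ^ (B + 1)) * f ^ B * euler_op f)"
      unfolding mult.assoc
      by (intro vanishes_below_const_mult vanishes_below_mult vanishes_below_power f vanishes_below_1_euler_op)
    then show ?thesis by (simp add: vanishes_below_def B_def)
  qed
  finally show "mfps_nth ((1 + f) * euler_op (mfps_ln1p f)) m = mfps_nth (euler_op f) m" by simp
qed

lemma mfps_ln1p_eqI:
  assumes f: "vanishes_below 1 f"
    and ode: "(1 + f) * euler_op g = euler_op f"
    and const: "mfps_nth g 0 = 0"
  shows "mfps_ln1p f = g"
proof (rule euler_ode_unique[OF f])
  show "(1 + f) * euler_op (mfps_ln1p f) = (1 + f) * euler_op g"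
    by (simp add: ln1p_ode[OF f] ode)
  have "mfps_nth (mfps_ln1p f) 0 = mfps_nth (ln1p_partial 0 f) 0"
    by (rule agree_upto_total_deg) (simp add: agree_upto_ln1p_partial[OF f])
  then show "mfps_nth (mfps_ln1p f) 0 = mfps_nth g 0"
    by (simp add: ln1p_partial_def const)
qed

section \<open>The logarithm of \<open>1 + pbar\<^sub>K\<close>\<close>

definition Pbar :: "nat \<Rightarrow> mfps" where
  "Pbar K = Abs_mfps (pbar K)"

definition exps_0_or :: "nat \<Rightarrow> mono \<Rightarrow> bool" where
  "exps_0_or K m \<longleftrightarrow> (\<forall>i. Poly_Mapping.lookup m i = 0 \<or> Poly_Mapping.lookup m i = K)"

lemma exps_0_or_lookup_nonzero:
  "exps_0_or K m \<Longrightarrow> i \<in> Poly_Mapping.keys m \<Longrightarrow> Poly_Mapping.lookup m i = K"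
  by (metis exps_0_or_def in_keys_iff)

lemma mfps_nth_one_plus_Pbar: "mfps_nth (1 + Pbar K) m = (if exps_0_or K m then 1 else 0)"
  by (cases "m = 0") (simp_all add: mfps_nth_one Pbar_def pbar_def exps_0_or_def)

lemma exps_0_or_diff_single:
  "exps_0_or K (m - Poly_Mapping.single i t) \<longleftrightarrow>
    (\<forall>j. j \<noteq> i \<longrightarrow> Poly_Mapping.lookup m j = 0 \<or> Poly_Mapping.lookup m j = K) \<and>
    (Poly_Mapping.lookup m i - t = 0 \<or> Poly_Mapping.lookup m i - t = K)"
  unfolding exps_0_or_def by (auto simp: lookup_minus lookup_single when_def)

lemma vanishes_below_Pbar:
  assumes "K \<ge> 1"
  shows "vanishes_below K (Pbar K)"
  unfolding vanishes_below_def
proof (intro allI impI)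
  fix m assume m: "total_deg m < K"
  show "mfps_nth (Pbar K) m = 0"
  proof (rule ccontr)
    assume "mfps_nth (Pbar K) m \<noteq> 0"
    then have "m \<noteq> 0" and exps: "\<forall>i. Poly_Mapping.lookup m i = 0 \<or> Poly_Mapping.lookup m i = K"
      by (auto simp: Pbar_def pbar_def split: if_splits)
    then obtain i where "Poly_Mapping.lookup m i \<noteq> 0"
      by (metis lookup_zero poly_mapping_eqI)
    then have "Poly_Mapping.lookup m i = K" using exps[rule_format, of i] by simp
    then show False using lookup_le_total_deg[of m i] m by simp
  qed
qed

lemma vanishes_below_1_Pbar: "K \<ge> 1 \<Longrightarrow> vanishes_below 1 (Pbar K)"
  using vanishes_below_Pbar vanishes_below_mono by blast

text \<open>\<open>\<Sum>\<^sub>i ln (1 + x\<^sub>i ^ K) = \<Sum>\<^sub>j (-1) ^ (j + 1) / j * p\<^sub>j\<^sub>K\<close>, which should be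
  \<open>ln (1 + pbar K) = ln (\<Prod>\<^sub>i (1 + x\<^sub>i ^ K))\<close>.\<close>
definition log_pbar :: "nat \<Rightarrow> mfps" where
  "log_pbar K = Abs_mfps (\<lambda>m.
     if card (Poly_Mapping.keys m) = 1 \<and> K dvd total_deg m then log_coeff (total_deg m div K) else 0)"

lemma mfps_nth_log_pbar_eq_0: "card (Poly_Mapping.keys m) \<noteq> 1 \<Longrightarrow> mfps_nth (log_pbar K) m = 0"
  by (simp add: log_pbar_def)

lemma mfps_nth_log_pbar_single:
  "j > 0 \<Longrightarrow> mfps_nth (log_pbar K) (Poly_Mapping.single i j) =
    (if K dvd j then log_coeff (j div K) else 0)"
  by (simp add: log_pbar_def)

definition euler_log_pbar_coeff :: "nat \<Rightarrow> nat \<Rightarrow> real" where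
  "euler_log_pbar_coeff K t = (if K dvd t then real K * (-1) ^ (t div K + 1) else 0)"

lemma mfps_nth_euler_log_pbar_single:
  assumes "K \<ge> 1" "t > 0"
  shows "mfps_nth (euler_op (log_pbar K)) (Poly_Mapping.single i t) = euler_log_pbar_coeff K t"
proof (cases "K dvd t")
  case True
  then obtain j where "t = K * j" by blast
  with assms show ?thesis
    by (simp add: mfps_nth_euler_op log_pbar_def euler_log_pbar_coeff_def log_coeff_def)
qed (use assms in \<open>simp add: mfps_nth_euler_op log_pbar_def euler_log_pbar_coeff_def\<close>)

lemma mfps_nth_euler_log_pbar_eq_0:
  "card (Poly_Mapping.keys b) \<noteq> 1 \<Longrightarrow> mfps_nth (euler_op (log_pbar K)) b = 0"
  by (simp add: mfps_nth_euler_op log_pbar_def)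

lemma mfps_nth_one_plus_Pbar_mult_euler_log_pbar:
  assumes K: "K \<ge> 1"
  shows "mfps_nth ((1 + Pbar K) * euler_op (log_pbar K)) m =
    (\<Sum>i\<in>Poly_Mapping.keys m. \<Sum>t\<in>{1..Poly_Mapping.lookup m i}.
       if exps_0_or K (m - Poly_Mapping.single i t) then euler_log_pbar_coeff K t else 0)"
  unfolding mfps_nth_mult
proof (subst sum_splittings_single_right)
  show "mfps_nth (1 + Pbar K) a * mfps_nth (euler_op (log_pbar K)) b = 0"
    if "card (Poly_Mapping.keys b) \<noteq> 1" for a b
    using that by (simp add: mfps_nth_euler_log_pbar_eq_0 del: mfps_nth_add)
qed (intro sum.cong refl, auto simp: mfps_nth_one_plus_Pbar mfps_nth_euler_log_pbar_single[OF K]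
       simp del: mfps_nth_add)

lemma euler_log_pbar_coeff_add_self:
  assumes "K \<ge> 1"
  shows "euler_log_pbar_coeff K (t + K) = - euler_log_pbar_coeff K t"
proof (cases "K dvd t")
  case True
  then obtain j where "t = K * j" by blast
  moreover have "K * j + K = K * (j + 1)" by simp
  ultimately show ?thesis
    using assms by (simp only: euler_log_pbar_coeff_def) simp
qed (simp add: euler_log_pbar_coeff_def)

text \<open>Only \<open>t = r\<close> and \<open>t = r - K\<close> contribute, with opposite signs.\<close>
lemma sum_euler_log_pbar_coeff_cancel:
  assumes K: "K \<ge> 1" and r: "r \<noteq> 0" "r \<noteq> K"
  shows "(\<Sum>t\<in>{1..r}. if r - t = 0 \<or> r - t = K then euler_log_pbar_coeff K t else 0) = 0"
proof -
  let ?T = "{t \<in> {1..r}. r - t = 0 \<or> r - t = K}"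
  have "(\<Sum>t\<in>{1..r}. if r - t = 0 \<or> r - t = K then euler_log_pbar_coeff K t else 0) =
      (\<Sum>t\<in>?T. euler_log_pbar_coeff K t)"
    by (rule sum.inter_filter[symmetric]) simp
  also have "\<dots> = 0"
  proof (cases "r < K")
    case True
    then have "?T = {r}" using r by auto
    moreover have "\<not> K dvd r" using True r by (auto dest: dvd_imp_le)
    ultimately show ?thesis by (simp add: euler_log_pbar_coeff_def)
  next
    case False
    then have "?T = {r - K, r}" and "r - K \<noteq> r" using r K by auto
    moreover have "euler_log_pbar_coeff K r = - euler_log_pbar_coeff K (r - K)"
      using False euler_log_pbar_coeff_add_self[OF K, of "r - K"] by simp
    ultimately show ?thesis by simp
  qed
  finally show ?thesis .
qed

lemma sum_euler_log_pbar_coeff_exps_0_or: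
  assumes K: "K \<ge> 1" and m: "exps_0_or K m" and i: "i \<in> Poly_Mapping.keys m"
  shows "(\<Sum>t\<in>{1..Poly_Mapping.lookup m i}.
      if exps_0_or K (m - Poly_Mapping.single i t) then euler_log_pbar_coeff K t else 0) = real K"
proof -
  have mi: "Poly_Mapping.lookup m i = K"
    using m i by (rule exps_0_or_lookup_nonzero)
  have "(\<Sum>t\<in>{1..Poly_Mapping.lookup m i}.
      if exps_0_or K (m - Poly_Mapping.single i t) then euler_log_pbar_coeff K t else 0) =
      (\<Sum>t\<in>{1..K}. if t = K then real K else 0)"
  proof (rule sum.cong)
    fix t assume t: "t \<in> {1..K}"
    then have "exps_0_or K (m - Poly_Mapping.single i t) \<longleftrightarrow> t = K"
      using m mi unfolding exps_0_or_diff_single by (auto simp: exps_0_or_def)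
    then show "(if exps_0_or K (m - Poly_Mapping.single i t) then euler_log_pbar_coeff K t else 0) =
        (if t = K then real K else 0)"
      using K by (simp add: euler_log_pbar_coeff_def)
  qed (simp add: mi)
  also have "\<dots> = real K" using K by simp
  finally show ?thesis .
qed

lemma sum_euler_log_pbar_coeff_not_exps_0_or:
  assumes K: "K \<ge> 1" and m: "\<not> exps_0_or K m"
  shows "(\<Sum>t\<in>{1..Poly_Mapping.lookup m i}.
      if exps_0_or K (m - Poly_Mapping.single i t) then euler_log_pbar_coeff K t else 0) = 0"
proof (cases "\<forall>j. j \<noteq> i \<longrightarrow> Poly_Mapping.lookup m j = 0 \<or> Poly_Mapping.lookup m j = K")
  case True
  obtain i' where "Poly_Mapping.lookup m i' \<noteq> 0" "Poly_Mapping.lookup m i' \<noteq> K"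
    using m by (auto simp: exps_0_or_def)
  moreover from this have "i' = i" using True[rule_format, of i'] by auto
  ultimately have r: "Poly_Mapping.lookup m i \<noteq> 0" "Poly_Mapping.lookup m i \<noteq> K"
    by simp_all
  have "exps_0_or K (m - Poly_Mapping.single i t) \<longleftrightarrow>
      Poly_Mapping.lookup m i - t = 0 \<or> Poly_Mapping.lookup m i - t = K" for t
    using True by (simp add: exps_0_or_diff_single)
  then show ?thesis
    using sum_euler_log_pbar_coeff_cancel[OF K r] by simp
next
  case False
  then have "\<not> exps_0_or K (m - Poly_Mapping.single i t)" for t
    unfolding exps_0_or_diff_single by blast
  then show ?thesis by simp
qed

lemma log_pbar_ode:
  assumes K: "K \<ge> 1"
  shows "(1 + Pbar K) * euler_op (log_pbar K) = euler_op (Pbar K)"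
proof (rule mfps_eqI)
  fix m
  show "mfps_nth ((1 + Pbar K) * euler_op (log_pbar K)) m = mfps_nth (euler_op (Pbar K)) m"
  proof (cases "exps_0_or K m")
    case True
    have "mfps_nth ((1 + Pbar K) * euler_op (log_pbar K)) m = (\<Sum>i\<in>Poly_Mapping.keys m. real K)"
      unfolding mfps_nth_one_plus_Pbar_mult_euler_log_pbar[OF K]
      by (rule sum.cong[OF refl]) (rule sum_euler_log_pbar_coeff_exps_0_or[OF K True])
    also have "\<dots> = real (total_deg m)"
      unfolding total_deg_def using True by (simp add: exps_0_or_lookup_nonzero)
    also have "\<dots> = mfps_nth (euler_op (Pbar K)) m"
      using True by (cases "m = 0") (simp_all add: mfps_nth_euler_op Pbar_def pbar_def exps_0_or_def)
    finally show ?thesis .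
  next
    case False
    have "mfps_nth ((1 + Pbar K) * euler_op (log_pbar K)) m = 0"
      unfolding mfps_nth_one_plus_Pbar_mult_euler_log_pbar[OF K]
      by (simp only: sum_euler_log_pbar_coeff_not_exps_0_or[OF K False] sum.neutral_const)
    also have "\<dots> = mfps_nth (euler_op (Pbar K)) m"
    proof -
      have "\<not> (\<forall>i. Poly_Mapping.lookup m i = 0 \<or> Poly_Mapping.lookup m i = K)"
        using False by (simp add: exps_0_or_def)
      then have "mfps_nth (Pbar K) m = 0" by (simp add: Pbar_def pbar_def)
      then show ?thesis by (simp add: mfps_nth_euler_op)
    qed
    finally show ?thesis .
  qed
qed

lemma mfps_ln1p_Pbar:
  assumes "K \<ge> 1"
  shows "mfps_ln1p (Pbar K) = log_pbar K"
proof (rule mfps_ln1p_eqI)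
  show "vanishes_below 1 (Pbar K)"
    using assms by (rule vanishes_below_1_Pbar)
  show "(1 + Pbar K) * euler_op (log_pbar K) = euler_op (Pbar K)"
    by (rule log_pbar_ode[OF assms])
qed (simp add: log_pbar_def)

section \<open>A divisor sum of \<open>muhat\<close>\<close>

lemma moebius_Suc_0 [simp]: "moebius (Suc 0) = 1"
  by (simp add: moebius_def)

lemma muhat_Suc_0 [simp]: "muhat (Suc 0) = 1"
  by (simp add: muhat_def)

lemma moebius_prime_mult:
  fixes p e :: nat
  assumes p: "prime p" and "\<not> p dvd e" and e: "e > 0"
  shows "moebius (p * e) = - moebius e"
proof -
  have cop: "coprime p e" using assms by (simp add: prime_imp_coprime)
  have sq: "squarefree (p * e) \<longleftrightarrow> squarefree e"
    using squarefree_multD(2)[of p e] squarefree_mult_coprime[OF cop squarefree_prime[OF p]] by blast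
  have pf: "prime_factors (p * e) = insert p (prime_factors e)"
    using p e by (simp add: prime_factors_product prime_prime_factors prime_gt_0_nat[THEN less_imp_neq, symmetric])
  have "p \<notin> prime_factors e" using assms by auto
  then have "card (prime_factors (p * e)) = Suc (card (prime_factors e))"
    by (simp add: pf)
  moreover have "p * e \<noteq> 0" using p e by (simp add: prime_gt_0_nat)
  ultimately show ?thesis using e sq by (simp add: moebius_def)
qed

lemma moebius_eq_0_if_prime_square_dvd:
  fixes p n :: nat
  assumes "prime p" "p ^ 2 dvd n"
  shows "moebius n = 0"
proof -
  have "\<not> squarefree n" using assms unfolding squarefree_def by auto
  then show ?thesis by (simp add: moebius_def)
qed

lemma muhat_2_power: "muhat (2 ^ b) = (if b = 0 then 1 else 2 ^ (b - 1))"
proof (cases "b = 0")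
  case False
  have "multiplicity (2::nat) (2 ^ b) = b" by (simp add: multiplicity_same_power)
  then show ?thesis using False by (simp add: muhat_def)
qed (simp add: muhat_def)

lemma multiplicity_2_odd_mult:
  fixes p d :: nat
  assumes "odd p" "d > 0"
  shows "multiplicity 2 (p * d) = multiplicity 2 d"
proof -
  have "multiplicity 2 (p * d) = multiplicity 2 p + multiplicity 2 d"
    using assms by (intro prime_elem_multiplicity_mult_distrib) (auto intro: odd_pos)
  moreover have "multiplicity (2::nat) p = 0" using assms by (intro not_dvd_imp_multiplicity_0) simp
  ultimately show ?thesis by simp
qed

lemma muhat_odd_prime_mult:
  fixes p d :: nat
  assumes p: "prime p" "odd p" and "\<not> p dvd d" and d: "d > 0"
  shows "muhat (p * d) = - muhat d"
proof (cases "odd d")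
  case True
  then show ?thesis using assms by (simp add: muhat_def moebius_prime_mult)
next
  case False
  define v where "v = multiplicity (2::nat) d"
  have "2 ^ v dvd d" unfolding v_def by (rule multiplicity_dvd)
  then obtain e where de: "d = 2 ^ v * e" by blast
  have "multiplicity 2 (p * d) = v" using multiplicity_2_odd_mult[OF p(2) d] by (simp add: v_def)
  moreover have "p * d div 2 ^ v = p * e" "d div 2 ^ v = e" using de by simp_all
  moreover have "\<not> p dvd e" "e > 0" using assms de by auto
  ultimately show ?thesis using False p
    by (simp add: muhat_def moebius_prime_mult v_def[symmetric])
qed

lemma muhat_eq_0_if_odd_prime_square_dvd:
  fixes p d :: nat
  assumes p: "prime p" "odd p" and sq: "p ^ 2 dvd d" and d: "d > 0"
  shows "muhat d = 0"
proof (cases "odd d")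
  case True
  then show ?thesis using moebius_eq_0_if_prime_square_dvd[OF p(1) sq] by (simp add: muhat_def)
next
  case False
  define v where "v = multiplicity (2::nat) d"
  have "2 ^ v dvd d" unfolding v_def by (rule multiplicity_dvd)
  then obtain e where de: "d = 2 ^ v * e" by blast
  have "coprime (p ^ 2) (2 ^ v)"
    using p by (metis coprime_power_left_iff coprime_power_right_iff prime_imp_coprime two_is_prime_nat
        primes_dvd_imp_eq even_iff_mod_2_eq_zero dvd_refl prime_nat_iff)
  then have "p ^ 2 dvd e" using sq de by (simp add: coprime_dvd_mult_right_iff)
  then have "moebius e = 0" by (rule moebius_eq_0_if_prime_square_dvd[OF p(1)])
  moreover have "d div 2 ^ v = e" using de by simp
  ultimately show ?thesis using False by (simp add: muhat_def v_def)
qed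

lemma sum_muhat_2_powers: "a \<ge> 1 \<Longrightarrow> (\<Sum>b<a. muhat (2 ^ b)) = 2 ^ (a - 1)"
proof (induction a rule: nat_induct_at_least)
  case (Suc n)
  then show ?case by (cases n) (simp_all add: muhat_2_power)
qed (simp add: muhat_2_power)

lemma signed_muhat_odd_prime_mult:
  fixes N p e :: nat
  assumes p: "prime p" "odd p" and e: "\<not> p dvd e" and dvd: "p * e dvd N" and N: "N > 0"
  shows "muhat (p * e) * (-1) ^ (N div (p * e) + 1) = - (muhat e * (-1) ^ (N div e + 1))"
proof -
  obtain k where k: "N = p * e * k" using dvd by blast
  then have "e > 0" "p > 0" using N by (auto intro: Nat.gr0I)
  then have "N div (p * e) = k" "N div e = p * k" using k by simp_all
  moreover have "(-1::real) ^ (p * k + 1) = (-1) ^ (k + 1)"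
    using p(2) by (simp add: power_mult)
  moreover have "muhat (p * e) = - muhat e"
    using muhat_odd_prime_mult[OF p e \<open>e > 0\<close>] .
  ultimately show ?thesis by simp
qed

text \<open>Pair each divisor \<open>d\<close> not divisible by \<open>p\<close> with \<open>p * d\<close>; the remaining divisors have
  \<open>muhat d = 0\<close>.\<close>
lemma signed_divisor_sum_muhat_odd_prime_dvd:
  fixes N p :: nat
  assumes N: "N > 0" and p: "prime p" "odd p" "p dvd N"
  shows "(\<Sum>d | d dvd N. muhat d * (-1) ^ (N div d + 1)) = 0"
proof -
  define h where "h d = muhat d * (-1) ^ (N div d + 1)" for d
  define A where "A = {d. d dvd N \<and> \<not> p dvd d}"
  define B where "B = (\<lambda>d. p * d) ` A"
  have p0: "p > 0" using p by (simp add: prime_gt_0_nat)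
  have fin: "finite {d. d dvd N}" using N by simp
  have pA: "p * e dvd N" if "e \<in> A" for e
  proof -
    have "coprime p e" using that p by (simp add: A_def prime_imp_coprime)
    then show ?thesis using that p by (intro divides_mult) (auto simp: A_def)
  qed
  have AB: "A \<union> B \<subseteq> {d. d dvd N}"
    using pA by (auto simp: A_def B_def)
  have "(\<Sum>d | d dvd N. h d) = (\<Sum>d\<in>A \<union> B. h d)"
  proof (rule sum.mono_neutral_right[OF fin AB], rule ballI)
    fix d assume d: "d \<in> {d. d dvd N} - (A \<union> B)"
    then have dN: "d dvd N" and "p dvd d" by (auto simp: A_def)
    then obtain e where de: "d = p * e" by blast
    have "p dvd e"
    proof (rule ccontr)
      assume "\<not> p dvd e"
      moreover have "e dvd N" using dN de by (metis dvd_mult_right)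
      ultimately have "d \<in> B" using de by (auto simp: A_def B_def)
      then show False using d by blast
    qed
    then have "p ^ 2 dvd d" using de by (auto simp: power2_eq_square)
    moreover have "d > 0" using dN N by (auto intro: Nat.gr0I)
    ultimately show "h d = 0" using muhat_eq_0_if_odd_prime_square_dvd[OF p(1,2)] by (simp add: h_def)
  qed
  also have "\<dots> = (\<Sum>d\<in>A. h d) + (\<Sum>d\<in>B. h d)"
  proof (rule sum.union_disjoint)
    show "finite A" using fin by (rule finite_subset[rotated]) (auto simp: A_def)
    then show "finite B" by (simp add: B_def)
    show "A \<inter> B = {}" by (auto simp: A_def B_def)
  qed
  also have "(\<Sum>d\<in>B. h d) = (\<Sum>d\<in>A. h (p * d))"
    unfolding B_def using p0 by (subst sum.reindex) (auto simp: inj_on_def)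
  also have "\<dots> = (\<Sum>d\<in>A. - h d)"
    unfolding h_def using pA N p by (intro sum.cong refl signed_muhat_odd_prime_mult) (auto simp: A_def)
  finally show ?thesis by (simp add: sum_negf h_def)
qed

lemma signed_divisor_sum_muhat_2_power:
  "(\<Sum>d | d dvd (2::nat) ^ a. muhat d * (-1) ^ (2 ^ a div d + 1)) = (if a = 0 then 1 else 0)"
proof -
  define h where "h d = muhat d * (-1) ^ ((2::nat) ^ a div d + 1)" for d
  have "{d. d dvd (2::nat) ^ a} = (\<lambda>b. 2 ^ b) ` {..a}"
    by (auto simp: divides_primepow_nat)
  then have "(\<Sum>d | d dvd (2::nat) ^ a. h d) = (\<Sum>b\<le>a. h (2 ^ b))"
    by (simp add: sum.reindex inj_on_def)
  also have "\<dots> = (\<Sum>b<a. h (2 ^ b)) + h (2 ^ a)"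
    by (simp add: lessThan_Suc_atMost[symmetric])
  also have "(\<Sum>b<a. h (2 ^ b)) = (\<Sum>b<a. - muhat (2 ^ b))"
  proof (rule sum.cong[OF refl])
    fix b assume "b \<in> {..<a}"
    then have "(2::nat) ^ a div 2 ^ b = 2 ^ (a - b)" "a - b > 0"
      by (auto simp: power_diff)
    then show "h (2 ^ b) = - muhat (2 ^ b)" by (simp add: h_def)
  qed
  finally have "(\<Sum>d | d dvd (2::nat) ^ a. h d) = muhat (2 ^ a) - (\<Sum>b<a. muhat (2 ^ b))"
    by (simp add: sum_negf h_def)
  also have "\<dots> = (if a = 0 then 1 else 0)"
  proof (cases "a = 0")
    case False
    then have "(\<Sum>b<a. muhat (2 ^ b)) = 2 ^ (a - 1)" "muhat (2 ^ a) = 2 ^ (a - 1)"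
      by (simp add: sum_muhat_2_powers, simp add: muhat_2_power)
    then show ?thesis using False by simp
  qed simp
  finally show ?thesis by (simp add: h_def)
qed

lemma signed_divisor_sum_muhat:
  assumes N: "(N::nat) > 0"
  shows "(\<Sum>d | d dvd N. muhat d * (-1) ^ (N div d + 1)) = (if N = 1 then 1 else 0)"
proof -
  define a where "a = multiplicity 2 N"
  obtain q where Nq: "N = 2 ^ a * q" and "odd q"
    using multiplicity_decompose'[of N 2] N unfolding a_def by force
  show ?thesis
  proof (cases "q = 1")
    case True
    have "N = 2 ^ a" using Nq True by simp
    moreover have "(2::nat) ^ a = 1 \<longleftrightarrow> a = 0" by simp
    ultimately show ?thesis using signed_divisor_sum_muhat_2_power[of a] by simp
  next
    case False
    then obtain p where p: "prime p" "p dvd q" using prime_factor_nat by blast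
    then have "odd p" using \<open>odd q\<close> by (auto elim: dvd_trans[rotated])
    moreover have "p dvd N" using p Nq by simp
    moreover have "N \<noteq> 1" using Nq False by simp
    ultimately show ?thesis using signed_divisor_sum_muhat_odd_prime_dvd[OF N p(1)] by simp
  qed
qed

section \<open>Power sums and their products\<close>

lemma sf_ln1p_pbar: "sf_ln1p (pbar K) = mfps_nth (mfps_ln1p (Pbar K))"
  by (simp add: mfps_ln1p_def Pbar_def)

lemma sf_sum_ln1p_pbar_eq_sum:
  assumes k: "k \<ge> 1" and m: "total_deg m \<le> B"
  shows "sf_sum (\<lambda>d. sf_scale (muhat d / real d) (sf_ln1p (pbar (d * k)))) {1..} m =
    (\<Sum>d\<in>{1..B}. muhat d / real d * mfps_nth (mfps_ln1p (Pbar (d * k))) m)"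
proof -
  have "sf_sum (\<lambda>d. sf_scale (muhat d / real d) (sf_ln1p (pbar (d * k)))) {1..} m =
      (\<Sum>d\<in>{1..} \<inter> {1..B}. sf_scale (muhat d / real d) (sf_ln1p (pbar (d * k))) m)"
  proof (rule sf_sum_eq_sum)
    fix d :: nat assume d: "d \<in> {1..}" and "sf_scale (muhat d / real d) (sf_ln1p (pbar (d * k))) m \<noteq> 0"
    then have "mfps_nth (log_pbar (d * k)) m \<noteq> 0"
      using k by (simp add: sf_scale_def sf_ln1p_pbar mfps_ln1p_Pbar)
    then have "total_deg m \<noteq> 0" "d * k dvd total_deg m"
      by (auto simp: log_pbar_def total_deg_eq_0_iff split: if_splits)
    then have "d * k \<le> total_deg m"
      by (simp add: dvd_imp_le)
    moreover have "d \<le> d * k" using k by simp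
    ultimately have "d \<le> B" using m by linarith
    then show "d \<in> {1..B}" using d by simp
  qed simp
  also have "{1..} \<inter> {1..B} = {1..B}" by auto
  also have "(\<Sum>d\<in>{1..B}. sf_scale (muhat d / real d) (sf_ln1p (pbar (d * k))) m) =
      (\<Sum>d\<in>{1..B}. muhat d / real d * mfps_nth (mfps_ln1p (Pbar (d * k))) m)"
    by (simp add: sf_scale_def sf_ln1p_pbar)
  finally show ?thesis .
qed

text \<open>The coefficient of \<open>x\<^sub>i ^ j\<close> in \<open>\<Sum>\<^sub>d muhat d / d * log_pbar (d * k)\<close>.\<close>
lemma sum_muhat_log_coeff:
  assumes k: "k \<ge> 1" and j: "j > 0"
  shows "(\<Sum>d\<in>{1..j}. muhat d / real d * (if d * k dvd j then log_coeff (j div (d * k)) else 0)) =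
    (if j = k then 1 else 0)"
proof (cases "k dvd j")
  case False
  then have "\<not> d * k dvd j" for d by (meson dvd_mult_right)
  with False show ?thesis by auto
next
  case True
  then obtain N where jN: "j = k * N" by blast
  have N: "N > 0" using jN j by simp
  have "(\<Sum>d\<in>{1..j}. muhat d / real d * (if d * k dvd j then log_coeff (j div (d * k)) else 0)) =
      (\<Sum>d\<in>{1..j}. if d dvd N then muhat d / real d * log_coeff (N div d) else 0)"
    using k by (intro sum.cong) (simp_all add: jN mult.commute)
  also have "\<dots> = (\<Sum>d\<in>{1..j} \<inter> {d. d dvd N}. muhat d / real d * log_coeff (N div d))"
    by (subst sum.inter_restrict) simp_all
  also have "{1..j} \<inter> {d. d dvd N} = {d. d dvd N}"
  proof -
    have "d \<in> {1..j}" if "d dvd N" for d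
    proof -
      have "d \<le> N" using that N by (rule dvd_imp_le)
      moreover have "N \<le> j" using jN k by simp
      moreover have "d \<noteq> 0" using that N by auto
      ultimately show ?thesis by simp
    qed
    then show ?thesis by auto
  qed
  also have "(\<Sum>d | d dvd N. muhat d / real d * log_coeff (N div d)) =
      (\<Sum>d | d dvd N. muhat d * (-1) ^ (N div d + 1)) / real N"
    unfolding sum_divide_distrib
  proof (rule sum.cong[OF refl])
    fix d assume "d \<in> {d. d dvd N}"
    then obtain e where "N = d * e" by auto
    with N show "muhat d / real d * log_coeff (N div d) = muhat d * (-1) ^ (N div d + 1) / real N"
      by (simp add: log_coeff_def)
  qed
  also have "\<dots> = (if N = 1 then 1 else 0)"
    unfolding signed_divisor_sum_muhat[OF N] by simp
  finally show ?thesis using jN k by simp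
qed

theorem psum_eq_sf_sum_ln1p_pbar:
  assumes k: "k \<ge> 1"
  shows "psum k = sf_sum (\<lambda>d. sf_scale (muhat d / real d) (sf_ln1p (pbar (d * k)))) {1..}"
proof (rule ext)
  fix m
  have "sf_sum (\<lambda>d. sf_scale (muhat d / real d) (sf_ln1p (pbar (d * k)))) {1..} m =
      (\<Sum>d\<in>{1..total_deg m}. muhat d / real d * mfps_nth (mfps_ln1p (Pbar (d * k))) m)"
    by (rule sf_sum_ln1p_pbar_eq_sum[OF k order.refl])
  also have "\<dots> = (\<Sum>d\<in>{1..total_deg m}. muhat d / real d * mfps_nth (log_pbar (d * k)) m)"
    using k by (intro sum.cong refl) (simp add: mfps_ln1p_Pbar)
  also have "\<dots> = psum k m"
  proof (cases "card (Poly_Mapping.keys m) = 1")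
    case True
    then obtain i j where m: "m = Poly_Mapping.single i j" and j: "j > 0"
      by (metis card_keys_eq_1_imp_single)
    have "(\<exists>i'. m = Poly_Mapping.single i' k) \<longleftrightarrow> j = k"
      using m single_eq_single_iff[OF j, of i _ k] by auto
    then have "psum k m = (if j = k then 1 else 0)"
      by (simp add: psum_def)
    then show ?thesis
      using sum_muhat_log_coeff[OF k j] by (simp add: m j mfps_nth_log_pbar_single)
  next
    case False
    moreover have "psum k m = 0"
      using False k by (auto simp: psum_def)
    ultimately show ?thesis by (simp add: mfps_nth_log_pbar_eq_0)
  qed
  finally show "psum k m = sf_sum (\<lambda>d. sf_scale (muhat d / real d) (sf_ln1p (pbar (d * k)))) {1..} m" ..
qed

definition Psum :: "nat \<Rightarrow> mfps" where
  "Psum k = Abs_mfps (psum k)"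

definition pbar_weight :: "nat \<Rightarrow> nat \<Rightarrow> real" where
  "pbar_weight d n = muhat d * (-1) ^ (n + 1) / (real d * real n)"

definition psum_trunc :: "nat \<Rightarrow> nat \<Rightarrow> mfps" where
  "psum_trunc B k = (\<Sum>(d, n)\<in>{1..B} \<times> {1..B}. mfps_const (pbar_weight d n) * Pbar (d * k) ^ n)"

lemma agree_upto_Psum_psum_trunc:
  assumes k: "k \<ge> 1"
  shows "agree_upto B (Psum k) (psum_trunc B k)"
  unfolding agree_upto_def
proof (intro allI impI)
  fix m assume m: "total_deg m \<le> B"
  have "mfps_nth (Psum k) m = (\<Sum>d\<in>{1..B}. muhat d / real d * mfps_nth (mfps_ln1p (Pbar (d * k))) m)"
    unfolding Psum_def mfps_nth_Abs_mfps psum_eq_sf_sum_ln1p_pbar[OF k]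
    by (rule sf_sum_ln1p_pbar_eq_sum[OF k m])
  also have "\<dots> = (\<Sum>d\<in>{1..B}. muhat d / real d * mfps_nth (ln1p_partial B (Pbar (d * k))) m)"
  proof (intro sum.cong refl)
    fix d :: nat assume "d \<in> {1..B}"
    then have "vanishes_below 1 (Pbar (d * k))" using k by (intro vanishes_below_1_Pbar) simp
    then show "muhat d / real d * mfps_nth (mfps_ln1p (Pbar (d * k))) m =
        muhat d / real d * mfps_nth (ln1p_partial B (Pbar (d * k))) m"
      using agree_upto_ln1p_partial m by (simp add: agree_upto_def)
  qed
  also have "\<dots> = mfps_nth (psum_trunc B k) m"
    by (simp add: psum_trunc_def ln1p_partial_def sum.cartesian_product sum_distrib_left
        pbar_weight_def log_coeff_def case_prod_beta mult.assoc)
  finally show "mfps_nth (Psum k) m = mfps_nth (psum_trunc B k) m" .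
qed

definition index_lists :: "nat \<Rightarrow> nat \<Rightarrow> (nat list \<times> nat list) set" where
  "index_lists B r = {(ds, ns). length ds = r \<and> length ns = r \<and> set ds \<subseteq> {1..B} \<and> set ns \<subseteq> {1..B}}"

definition part_weight :: "nat list \<Rightarrow> nat list \<Rightarrow> nat list \<Rightarrow> real" where
  "part_weight lam ds ns = (\<Prod>i<length lam. pbar_weight (ds ! i) (ns ! i))"

definition pbar_power_prod :: "nat list \<Rightarrow> nat list \<Rightarrow> nat list \<Rightarrow> mfps" where
  "pbar_power_prod lam ds ns = (\<Prod>i<length lam. Pbar (ds ! i * lam ! i) ^ (ns ! i))"

lemma finite_index_lists: "finite (index_lists B r)"
proof -
  let ?L = "{xs. set xs \<subseteq> {1..B} \<and> length xs = r}"
  have "index_lists B r \<subseteq> ?L \<times> ?L"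
    by (auto simp: index_lists_def)
  moreover have "finite (?L \<times> ?L)"
    by (intro finite_cartesian_product finite_lists_length_eq) simp_all
  ultimately show ?thesis by (rule finite_subset)
qed

lemma part_weight_Cons: "part_weight (k # lam) (d # ds) (n # ns) = pbar_weight d n * part_weight lam ds ns"
  unfolding part_weight_def length_Cons prod.lessThan_Suc_shift by simp

lemma pbar_power_prod_Cons:
  "pbar_power_prod (k # lam) (d # ds) (n # ns) = Pbar (d * k) ^ n * pbar_power_prod lam ds ns"
  unfolding pbar_power_prod_def length_Cons prod.lessThan_Suc_shift by simp

lemma prod_list_psum_trunc:
  "prod_list (map (psum_trunc B) lam) =
    (\<Sum>(ds, ns)\<in>index_lists B (length lam). mfps_const (part_weight lam ds ns) * pbar_power_prod lam ds ns)"
proof (induction lam)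
  case Nil
  have "index_lists B 0 = {([], [])}" by (auto simp: index_lists_def)
  then show ?case by (simp add: part_weight_def pbar_power_prod_def)
next
  case (Cons k lam)
  let ?g = "\<lambda>t. mfps_const (part_weight lam (fst t) (snd t)) * pbar_power_prod lam (fst t) (snd t)"
  let ?f = "\<lambda>p. mfps_const (pbar_weight (fst p) (snd p)) * Pbar (fst p * k) ^ (snd p)"
  have "prod_list (map (psum_trunc B) (k # lam)) = psum_trunc B k * (\<Sum>t\<in>index_lists B (length lam). ?g t)"
    using Cons by (simp add: case_prod_beta)
  also have "\<dots> = (\<Sum>pt\<in>({1..B} \<times> {1..B}) \<times> index_lists B (length lam). ?f (fst pt) * ?g (snd pt))"
    by (simp add: psum_trunc_def sum_product sum.cartesian_product case_prod_beta)
  also have "\<dots> = (\<Sum>t\<in>index_lists B (length (k # lam)).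
      mfps_const (part_weight (k # lam) (fst t) (snd t)) * pbar_power_prod (k # lam) (fst t) (snd t))"
  proof (rule sum.reindex_bij_witness[where i = "\<lambda>t. ((hd (fst t), hd (snd t)), (tl (fst t), tl (snd t)))"
        and j = "\<lambda>pt. (fst (fst pt) # fst (snd pt), snd (fst pt) # snd (snd pt))"], goal_cases)
    case (3 t)
    then obtain ds ns where "t = (ds, ns)" "length ds = Suc (length lam)" "length ns = Suc (length lam)"
      by (auto simp: index_lists_def)
    then show ?case by (cases ds; cases ns) auto
  next
    case (4 t)
    then obtain ds ns where "t = (ds, ns)" "length ds = Suc (length lam)" "length ns = Suc (length lam)"
       "set ds \<subseteq> {1..B}" "set ns \<subseteq> {1..B}"
      by (auto simp: index_lists_def)
    then show ?case by (cases ds; cases ns) (auto simp: index_lists_def)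
  next
    case (5 pt)
    show ?case by (simp add: part_weight_Cons pbar_power_prod_Cons mfps_const_mult algebra_simps)
  qed (auto simp: index_lists_def)
  finally show ?case by (simp add: case_prod_beta)
qed

lemma prod_list_map_concat: "prod_list (map f (concat xss)) = prod_list (map (\<lambda>xs. prod_list (map f xs)) xss)"
  by (induction xss) simp_all

lemma pbar_part_dpow_part:
  assumes "length ds = length lam" "length ns = length lam"
  shows "pbar_part (dpow_part lam ds ns) = mfps_nth (pbar_power_prod lam ds ns)"
proof -
  have pbar_part_eq: "pbar_part xs = mfps_nth (prod_list (map Pbar xs))" for xs
  proof -
    have "map Pbar xs = map Abs_mfps (map pbar xs)" by (simp add: Pbar_def)
    then show ?thesis unfolding pbar_part_def mfps_nth_prod_list[symmetric] by (simp only:)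
  qed
  define L where "L = concat (map (\<lambda>i. replicate (ns ! i) (ds ! i * lam ! i)) [0..<length lam])"
  have "prod_list (map Pbar (rev (sort L))) = prod_list (map Pbar L)"
    by (simp only: prod_mset_prod_list[symmetric] mset_map mset_rev mset_sort)
  also have "\<dots> = prod_list (map (\<lambda>i. Pbar (ds ! i * lam ! i) ^ (ns ! i)) [0..<length lam])"
    by (simp add: L_def prod_list_map_concat comp_def)
  also have "\<dots> = pbar_power_prod lam ds ns"
    unfolding pbar_power_prod_def by (simp add: prod.distinct_set_conv_list[symmetric] atLeast0LessThan)
  finally show ?thesis by (simp add: pbar_part_eq dpow_part_def L_def)
qed

lemma vanishes_below_pbar_power_prod:
  assumes "\<forall>x\<in>set lam. 0 < x" "length ds = length lam" "\<forall>x\<in>set ds. 0 < x"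
  shows "vanishes_below (\<Sum>i<length lam. ns ! i * (ds ! i * lam ! i)) (pbar_power_prod lam ds ns)"
  unfolding pbar_power_prod_def
proof (rule vanishes_below_prod, simp)
  fix i assume "i \<in> {..<length lam}"
  then have "ds ! i * lam ! i \<ge> 1" using assms by (simp add: Suc_le_eq nth_mem)
  then show "vanishes_below (ns ! i * (ds ! i * lam ! i)) (Pbar (ds ! i * lam ! i) ^ (ns ! i))"
    by (intro vanishes_below_power vanishes_below_Pbar)
qed

text \<open>The product has no terms of degree below \<open>\<Sum>\<^sub>i n\<^sub>i d\<^sub>i \<lambda>\<^sub>i\<close>, which bounds all \<open>d\<^sub>i\<close>
  and \<open>n\<^sub>i\<close>.\<close>
lemma pbar_power_prod_nonzero_imp_index_lists:
  assumes lam: "\<forall>x\<in>set lam. 0 < x"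
    and len: "length ds = length lam" "length ns = length lam"
    and pos: "\<forall>x\<in>set ds. 0 < x" "\<forall>x\<in>set ns. 0 < x"
    and nz: "mfps_nth (pbar_power_prod lam ds ns) m \<noteq> 0"
  shows "(ds, ns) \<in> index_lists (total_deg m) (length lam)"
proof -
  let ?S = "\<Sum>i<length lam. ns ! i * (ds ! i * lam ! i)"
  have "?S \<le> total_deg m"
    using vanishes_below_pbar_power_prod[OF lam len(1) pos(1), of ns] nz
    by (auto simp: vanishes_below_def not_less[symmetric])
  moreover have "ds ! i \<le> ?S \<and> ns ! i \<le> ?S" if i: "i < length lam" for i
  proof -
    have "lam ! i > 0" "ds ! i > 0" "ns ! i > 0" using i lam pos len by (auto simp: nth_mem)
    then have "ds ! i \<le> ns ! i * (ds ! i * lam ! i)" "ns ! i \<le> ns ! i * (ds ! i * lam ! i)"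
      by (simp_all add: Suc_le_eq)
    moreover have "ns ! i * (ds ! i * lam ! i) \<le> ?S"
      using i by (intro member_le_sum) simp_all
    ultimately show ?thesis by linarith
  qed
  ultimately have "set ds \<subseteq> {1..total_deg m}" "set ns \<subseteq> {1..total_deg m}"
    using pos len by (fastforce simp: in_set_conv_nth Suc_le_eq)+
  then show ?thesis using len by (simp add: index_lists_def)
qed

theorem psum_part_eq_sf_sum_pbar_part:
  assumes "is_partition lam"
  shows "psum_part lam =
    sf_sum (\<lambda>(d, n). sf_scale
              (\<Prod>i<length lam. muhat (d ! i) * (-1) ^ (n ! i + 1) / (real (d ! i) * real (n ! i)))
              (pbar_part (dpow_part lam d n)))
      {(d, n). length d = length lam \<and> length n = length lam \<and>
               (\<forall>x \<in> set d. 0 < x) \<and> (\<forall>x \<in> set n. 0 < x)}"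
    (is "_ = sf_sum ?G ?I")
proof (rule ext)
  fix m
  define B where "B = total_deg m"
  have lam: "\<forall>x\<in>set lam. 0 < x" using assms by (simp add: is_partition_def)
  have G: "?G t m = part_weight lam (fst t) (snd t) * mfps_nth (pbar_power_prod lam (fst t) (snd t)) m"
    if "t \<in> ?I" for t
    using that by (auto simp: sf_scale_def part_weight_def pbar_weight_def pbar_part_dpow_part)
  have "psum_part lam m = mfps_nth (prod_list (map Psum lam)) m"
  proof -
    have "map Psum lam = map Abs_mfps (map psum lam)" by (simp add: Psum_def)
    then show ?thesis unfolding psum_part_def mfps_nth_prod_list[symmetric] by (simp only:)
  qed
  also have "\<dots> = mfps_nth (prod_list (map (psum_trunc B) lam)) m"
    unfolding B_def using lam
    by (intro agree_upto_total_deg agree_upto_prod_list agree_upto_Psum_psum_trunc) (simp add: Suc_le_eq)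
  also have "\<dots> = (\<Sum>t\<in>index_lists B (length lam).
      part_weight lam (fst t) (snd t) * mfps_nth (pbar_power_prod lam (fst t) (snd t)) m)"
    by (simp add: prod_list_psum_trunc case_prod_beta)
  also have "\<dots> = (\<Sum>t\<in>?I \<inter> index_lists B (length lam). ?G t m)"
  proof -
    have sub: "index_lists B (length lam) \<subseteq> ?I" by (auto simp: index_lists_def)
    then have "?I \<inter> index_lists B (length lam) = index_lists B (length lam)" by blast
    then show ?thesis
      using sub by (simp only:) (intro sum.cong refl G[symmetric]; blast)
  qed
  also have "\<dots> = sf_sum ?G ?I m"
  proof (rule sf_sum_eq_sum[symmetric, OF finite_index_lists])
    fix t assume t: "t \<in> ?I" "?G t m \<noteq> 0"
    then show "t \<in> index_lists B (length lam)"
      using G[OF t(1)] pbar_power_prod_nonzero_imp_index_lists[OF lam] by (auto simp: B_def)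
  qed
  finally show "psum_part lam m = sf_sum ?G ?I m" .
qed

theorem mainTheorem13:
  shows "(\<forall>k::nat. k \<ge> 1 \<longrightarrow>
           psum k = sf_sum (\<lambda>d. sf_scale (muhat d / real d) (sf_ln1p (pbar (d * k)))) {1..})
       \<and> (\<forall>lam. is_partition lam \<longrightarrow>
           psum_part lam =
             sf_sum (\<lambda>(d, n). sf_scale
                       (\<Prod>i<length lam. muhat (d ! i) * (-1) ^ (n ! i + 1)
                                          / (real (d ! i) * real (n ! i)))
                       (pbar_part (dpow_part lam d n)))
               {(d, n). length d = length lam \<and> length n = length lam \<and>
                        (\<forall>x \<in> set d. 0 < x) \<and> (\<forall>x \<in> set n. 0 < x)})"
  using psum_eq_sf_sum_ln1p_pbar psum_part_eq_sf_sum_pbar_part by blast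

end
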